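(* Let $N$ be a positive integer, let $(\lambda_k)_{k=-\infty}^\infty$ be a strictly increasing sequence of real numbers, and let $\delta_k:=\min\{\lambda_k-\lambda_{k-1},\lambda_{k+1}-\lambda_k\}$. Assume $C_3$ is a positive constant such that $$\sum_{m=1}^N\sum_{\substack{n=1\\ n\ne m}}^N\frac{\delta_m^{3/2}\delta_n^{1/2}t_mt_n}{(\lambda_m-\lambda_n)^2}\le C_3\sum_{n=1}^N t_n^2$$ for all nonnegative real numbers $t_1,\dots,t_N$. Then for all complex numbers $z_1,\dots,z_N$, $$\left|\sum_{m=1}^N\sum_{\substack{n=1\\ n\ne m}}^N\frac{z_m\overline{z_n}}{\lambda_m-\lambda_n}\right|\le\sqrt{\frac{\pi^2}{3}+2C_3}\;\sum_{n=1}^N\frac{|z_n|^2}{\delta_n}.$$ *)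

theory Defs
  imports "HOL-Analysis.Analysis"
begin

definition gap :: "(int \<Rightarrow> real) \<Rightarrow> int \<Rightarrow> real" where
  "gap lam k = min (lam k - lam (k - 1)) (lam (k + 1) - lam k)"

end

(*
  Write (H z)_m = sum_{n <> m} z_n / (lambda_m - lambda_n). The bilinear form is
  sum_m z_m conj ((H z)_m), so by Cauchy-Schwarz it suffices to bound the energy
  sum_m delta_m |(H z)_m|^2 by (pi^2/3 + 2 C_3) sum_m |z_m|^2 / delta_m, and splitting z into
  real and imaginary parts it suffices to do so for real x.

  Following Montgomery and Vaughan, let x maximise the energy on the unit sphere of the weighted
  norm, with maximum sigma. The Lagrange condition says that v = delta (H x) satisfies
  H v = - sigma x / delta, so u = x + i v / sqrt sigma satisfies H u = - i sqrt sigma u / delta.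
  Expanding |(H u)_m|^2 with the partial fraction identity
  1 / ((a - b) (a - c)) = 1 / ((b - c) (a - b)) + 1 / ((c - b) (a - c)), the cross terms reduce to
  Re (u_n conj ((H u)_n)), which vanish for this eigenvector. What remains is the diagonal sum
  sum_{m <> n} delta_m / (lambda_m - lambda_n)^2 <= pi^2 / (3 delta_n) and an off-diagonal form,
  which the hypothesis bounds after substituting t_n = |u_n| / sqrt delta_n.

  For the diagonal bound, the one-sided sum is dominated, term by term along the sequence, by
  the Riemann sum sum_k s / (c + k s)^2 of the integral of 1 / x^2 with c = s = delta_n, whose
  value is pi^2 / (6 delta_n). The changes of start and step needed along the way can only
  increase this Riemann sum, by its representation as
  integral_0^infinity e^(-c x) s x / (1 - e^(-s x)) dx and the monotonicity of the slopes of exp.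
*)
theory Submission
  imports Defs "HOL-Probability.Distributions"
begin

section \<open>Riemann sums of \<open>1 / x\<^sup>2\<close>\<close>

lemma exp_slope_mono:
  fixes u v :: real
  assumes "u \<noteq> 0" "v \<noteq> 0" "u \<le> v"
  shows "(exp u - 1) / u \<le> (exp v - 1) / v"
proof -
  have cvx: "convex_on UNIV exp" by (rule exp_convex)
  have flip: "(1 - exp x) / (0 - x) = (exp x - 1) / x" for x :: real
    by (metis diff_0 minus_diff_eq minus_divide_divide)
  consider "u = v" | "0 < u" "u < v" | "u < v" "v < 0" | "u < 0" "0 < v"
    using assms by linarith
  then show ?thesis
  proof cases
    case 2
    then show ?thesis using convex_on_slope_le(1)[OF cvx UNIV_I UNIV_I 2] by (simp only: exp_zero flip)
  next
    case 3
    then show ?thesis using convex_on_slope_le(2)[OF cvx UNIV_I UNIV_I 3] by simp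
  next
    case 4
    then show ?thesis using convex_on_slope_le[OF cvx UNIV_I UNIV_I 4] by (simp only: exp_zero diff_0_right flip)
  qed simp
qed

lemma div_one_minus_exp_neg_mono:
  fixes a b :: real
  assumes "0 < a" "a \<le> b"
  shows "a / (1 - exp (-a)) \<le> b / (1 - exp (-b))"
proof -
  have "(exp (-b) - 1) / (-b) \<le> (exp (-a) - 1) / (-a)"
    using assms by (intro exp_slope_mono) auto
  moreover have "0 < (exp (-b) - 1) / (-b)"
    using assms by (intro divide_neg_neg) auto
  ultimately have "inverse ((exp (-a) - 1) / (-a)) \<le> inverse ((exp (-b) - 1) / (-b))"
    by (rule le_imp_inverse_le)
  moreover have "inverse ((exp (-x) - 1) / (-x)) = x / (1 - exp (-x))" for x :: real
    by (metis inverse_divide minus_diff_eq minus_divide_divide)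
  ultimately show ?thesis by (simp only:)
qed

lemma div_exp_minus_one_antimono:
  fixes a b :: real
  assumes "0 < a" "a \<le> b"
  shows "b / (exp b - 1) \<le> a / (exp a - 1)"
proof -
  have "(exp a - 1) / a \<le> (exp b - 1) / b"
    using assms by (intro exp_slope_mono) auto
  moreover have "0 < (exp a - 1) / a"
    using assms by (intro divide_pos_pos) auto
  ultimately have "inverse ((exp b - 1) / b) \<le> inverse ((exp a - 1) / a)"
    by (rule le_imp_inverse_le)
  then show ?thesis by simp
qed

lemma exp_neg_mult_div_one_minus_exp_neg:
  fixes a :: real
  shows "exp (-a) * (a / (1 - exp (-a))) = a / (exp a - 1)"
proof (cases "a = 0")
  case False
  then have "exp a - 1 \<noteq> 0" "1 - exp (-a) \<noteq> 0" by auto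
  then show ?thesis by (simp add: exp_minus field_simps)
qed simp

lemma nn_integral_x_exp_neg:
  fixes l s :: real
  assumes l: "0 < l" and s: "0 \<le> s"
  shows "(\<integral>\<^sup>+x. ennreal (if 0 < x then s * x * exp (-(l*x)) else 0) \<partial>lborel) = ennreal (s / l^2)"
proof -
  have "(\<integral>\<^sup>+x. ennreal (if 0 < x then s * x * exp (-(l*x)) else 0) \<partial>lborel)
      = (\<integral>\<^sup>+x. ennreal (s/l) * ennreal (erlang_density 0 l x * x ^ 1) \<partial>lborel)"
    using l s by (intro nn_integral_cong) (auto simp: erlang_density_def ennreal_mult[symmetric])
  also have "\<dots> = ennreal (s/l) * ennreal (1 / l)"
    using nn_integral_erlang_ith_moment[OF l, of 0 1] by (simp add: nn_integral_cmult)
  also have "\<dots> = ennreal (s / l^2)"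
    using l s by (simp add: ennreal_mult[symmetric] power2_eq_square)
  finally show ?thesis .
qed

text \<open>A Riemann sum with step \<open>s\<close> for \<open>\<integral>\<^sub>c\<^sup>\<infinity> dx / x\<^sup>2 = 1 / c\<close>; summed in \<open>ennreal\<close>,
  so that no summability side conditions arise.\<close>
definition inverse_square_sum :: "real \<Rightarrow> real \<Rightarrow> ennreal" where
  "inverse_square_sum c s = (\<Sum>k. ennreal (s / (c + real k * s)^2))"

lemma exp_progression_sums:
  fixes c s x :: real
  assumes "0 < s" "0 < x"
  shows "(\<lambda>k. s * x * exp (-((c + real k * s) * x))) sums (exp (-(c*x)) * (s*x / (1 - exp (-(s*x)))))"
proof -
  have "norm (exp (-(s*x))) < 1" using assms by simp
  from sums_mult[OF geometric_sums[OF this], of "s * x * exp (-(c*x))"]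
  have "(\<lambda>k. s * x * exp (-(c*x)) * exp (-(s*x)) ^ k) sums (exp (-(c*x)) * (s*x / (1 - exp (-(s*x)))))"
    by (simp add: ac_simps)
  moreover have "exp (-((c + real k * s) * x)) = exp (-(c*x)) * exp (-(s*x)) ^ k" for k
    by (simp add: exp_of_nat_mult[symmetric] exp_add[symmetric] algebra_simps)
  ultimately show ?thesis by (simp add: ac_simps)
qed

lemma inverse_square_sum_integral:
  fixes c s :: real
  assumes c: "0 < c" and s: "0 < s"
  shows "inverse_square_sum c s
    = (\<integral>\<^sup>+x. ennreal (if 0 < x then exp (-(c*x)) * (s*x / (1 - exp (-(s*x)))) else 0) \<partial>lborel)"
proof -
  have "inverse_square_sum c s
      = (\<Sum>k. \<integral>\<^sup>+x. ennreal (if 0 < x then s * x * exp (-((c + real k * s)*x)) else 0) \<partial>lborel)"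
    unfolding inverse_square_sum_def using c s
    by (intro suminf_cong nn_integral_x_exp_neg[symmetric]) (auto intro: add_pos_nonneg)
  also have "\<dots> = (\<integral>\<^sup>+x. (\<Sum>k. ennreal (if 0 < x then s * x * exp (-((c + real k * s)*x)) else 0)) \<partial>lborel)"
    by (rule nn_integral_suminf[symmetric]) auto
  also have "\<dots> = (\<integral>\<^sup>+x. ennreal (if 0 < x then exp (-(c*x)) * (s*x / (1 - exp (-(s*x)))) else 0) \<partial>lborel)"
  proof (intro nn_integral_cong)
    fix x :: real
    show "(\<Sum>k. ennreal (if 0 < x then s * x * exp (-((c + real k * s)*x)) else 0))
        = ennreal (if 0 < x then exp (-(c*x)) * (s*x / (1 - exp (-(s*x)))) else 0)"
      using exp_progression_sums[OF s, of x c] s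
      by (cases "0 < x") (auto intro!: suminf_ennreal_eq)
  qed
  finally show ?thesis .
qed

lemma inverse_square_sum_antimono_start:
  assumes "0 < c" "c \<le> c'" "0 \<le> s"
  shows "inverse_square_sum c' s \<le> inverse_square_sum c s"
  unfolding inverse_square_sum_def
proof (rule suminf_le[OF _ summableI summableI])
  fix k
  have "0 < c + real k * s" using assms by (intro add_pos_nonneg) auto
  then show "ennreal (s / (c' + real k * s)^2) \<le> ennreal (s / (c + real k * s)^2)"
    using assms by (intro ennreal_leI divide_left_mono power_mono mult_pos_pos) auto
qed

lemma inverse_square_sum_mono_step:
  assumes c: "0 < c" and s: "0 < s" and st: "s \<le> t"
  shows "inverse_square_sum c s \<le> inverse_square_sum c t"
proof -
  have t: "0 < t" using s st by simp
  have "s*x / (1 - exp (-(s*x))) \<le> t*x / (1 - exp (-(t*x)))" if "0 < x" for x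
    using that s st by (intro div_one_minus_exp_neg_mono mult_right_mono) auto
  from mult_left_mono[OF this exp_ge_zero]
  show ?thesis
    unfolding inverse_square_sum_integral[OF c s] inverse_square_sum_integral[OF c t]
    by (intro nn_integral_mono ennreal_leI) auto
qed

lemma inverse_square_sum_shifted_antimono:
  assumes p: "0 \<le> p" and s: "0 < s" and st: "s \<le> t"
  shows "inverse_square_sum (p + t) t \<le> inverse_square_sum (p + s) s"
proof -
  have t: "0 < t" using s st by simp
  have integrand: "exp (-((p + u) * x)) * (u*x / (1 - exp (-(u*x)))) = exp (-(p*x)) * (u*x / (exp (u*x) - 1))"
    for u x :: real
  proof -
    have "exp (-((p + u) * x)) = exp (-(p*x)) * exp (-(u*x))"
      by (simp add: distrib_right exp_add[symmetric])
    then show ?thesis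
      by (simp only: mult.assoc exp_neg_mult_div_one_minus_exp_neg)
  qed
  have "t*x / (exp (t*x) - 1) \<le> s*x / (exp (s*x) - 1)" if "0 < x" for x
    using that s st by (intro div_exp_minus_one_antimono mult_right_mono) auto
  from mult_left_mono[OF this exp_ge_zero]
  show ?thesis
    unfolding inverse_square_sum_integral[OF add_nonneg_pos[OF p s] s]
      inverse_square_sum_integral[OF add_nonneg_pos[OF p t] t] integrand
    by (intro nn_integral_mono ennreal_leI) auto
qed

lemma inverse_square_sum_split_first:
  assumes "0 < c" "0 \<le> s"
  shows "inverse_square_sum c s = ennreal (s / c^2) + inverse_square_sum (c + s) s"
proof -
  have "inverse_square_sum c s
      = (\<Sum>j. ennreal (s / (c + real (j + 1) * s)^2)) + (\<Sum>j<1. ennreal (s / (c + real j * s)^2))"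
    unfolding inverse_square_sum_def by (rule suminf_offset) simp
  then show ?thesis
    unfolding inverse_square_sum_def by (simp add: algebra_simps)
qed

lemma inverse_square_sum_start_eq_step:
  assumes s: "0 < s"
  shows "inverse_square_sum s s = ennreal (pi^2 / (6 * s))"
proof -
  have "s / (s + real k * s)^2 = (1/s) * (1 / (real k + 1)^2)" for k
  proof -
    have "(s + real k * s)^2 = s^2 * (real k + 1)^2" by algebra
    then show ?thesis using s by (simp add: power2_eq_square)
  qed
  moreover have "(\<lambda>k. (1/s) * (1 / (real k + 1)^2)) sums (pi^2 / (6 * s))"
    using sums_mult[OF inverse_squares_sums, of "1/s"] by (simp add: add.commute mult.commute)
  ultimately show ?thesis
    unfolding inverse_square_sum_def using s by (intro suminf_ennreal_eq) auto
qed

lemma inverse_square_sum_next: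
  assumes p: "0 \<le> p" and a: "0 < a" and b: "0 < b" and ag: "a \<le> g" and bg: "b \<le> g"
  shows "ennreal (b / (p + g)^2) + inverse_square_sum (p + g + b) b \<le> inverse_square_sum (p + a) a"
proof -
  have "ennreal (b / (p + g)^2) + inverse_square_sum (p + g + b) b = inverse_square_sum (p + g) b"
    using inverse_square_sum_split_first[of "p + g" b] p a ag b by simp
  also have "\<dots> \<le> inverse_square_sum (p + a) a"
  proof (cases "a \<le> b")
    case True
    have "inverse_square_sum (p + g) b \<le> inverse_square_sum (p + b) b"
      using p b bg by (intro inverse_square_sum_antimono_start) auto
    also have "\<dots> \<le> inverse_square_sum (p + a) a"
      using p a True by (rule inverse_square_sum_shifted_antimono)
    finally show ?thesis .
  next
    case False
    have "inverse_square_sum (p + g) b \<le> inverse_square_sum (p + a) b"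
      using p a b ag by (intro inverse_square_sum_antimono_start) auto
    also have "\<dots> \<le> inverse_square_sum (p + a) a"
      using p a b False by (intro inverse_square_sum_mono_step) auto
    finally show ?thesis .
  qed
  finally show ?thesis .
qed

section \<open>The diagonal sum\<close>

lemma gap_pos: "strict_mono lam \<Longrightarrow> 0 < gap lam k"
  unfolding gap_def by (auto simp: strict_mono_def)

lemma gap_le_right: "gap lam k \<le> lam (k + 1) - lam k"
  unfolding gap_def by simp

lemma gap_le_left: "gap lam k \<le> lam k - lam (k - 1)"
  unfolding gap_def by simp

lemma gap_reflect: "gap (\<lambda>k. - lam (- k)) k = gap lam (- k)"
proof -
  have "- (k - 1) = - k + 1" "- (k + 1) = - k - 1" by simp_all
  then show ?thesis unfolding gap_def by (simp only: min.commute)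
qed

text \<open>Telescoping with \<open>inverse_square_sum_next\<close>: each new term of the sum is paid for by the
  first term of the Riemann sum, whose start then moves past \<open>\<lambda> (n + J)\<close>.\<close>
lemma gap_sum_right_plus_inverse_square_sum:
  assumes sm: "strict_mono lam"
  shows "ennreal (\<Sum>j=1..J. gap lam (n + int j) / (lam (n + int j) - lam n)^2)
     + inverse_square_sum (lam (n + int J) - lam n + gap lam (n + int J)) (gap lam (n + int J))
     \<le> inverse_square_sum (gap lam n) (gap lam n)"
proof (induction J)
  case (Suc J)
  define S where "S = (\<Sum>j=1..J. gap lam (n + int j) / (lam (n + int j) - lam n)^2)"
  define p where "p = lam (n + int J) - lam n"
  define a where "a = gap lam (n + int J)"
  define b where "b = gap lam (n + int (Suc J))"
  define g where "g = lam (n + int (Suc J)) - lam (n + int J)"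
  have p: "0 \<le> p" unfolding p_def using sm by (auto simp: strict_mono_less_eq)
  have ag: "a \<le> g" unfolding a_def g_def using gap_le_right[of lam "n + int J"] by (simp add: ac_simps)
  have bg: "b \<le> g" unfolding b_def g_def using gap_le_left[of lam "n + int (Suc J)"] by (simp add: add.assoc)
  have pg: "p + g = lam (n + int (Suc J)) - lam n" unfolding p_def g_def by simp
  have "0 \<le> S" unfolding S_def using sm
    by (intro sum_nonneg divide_nonneg_nonneg) (auto intro: less_imp_le gap_pos)
  moreover have "(\<Sum>j=1..Suc J. gap lam (n + int j) / (lam (n + int j) - lam n)^2) = S + b / (p + g)^2"
    unfolding S_def pg b_def by simp
  moreover have "0 \<le> b / (p + g)^2" unfolding b_def using gap_pos[OF sm] by (simp add: less_imp_le)
  ultimately have "ennreal (\<Sum>j=1..Suc J. gap lam (n + int j) / (lam (n + int j) - lam n)^2)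
      = ennreal S + ennreal (b / (p + g)^2)"
    by (simp add: ennreal_plus)
  moreover have "lam (n + int (Suc J)) - lam n + gap lam (n + int (Suc J)) = p + g + b"
    unfolding pg b_def ..
  ultimately have "ennreal (\<Sum>j=1..Suc J. gap lam (n + int j) / (lam (n + int j) - lam n)^2)
      + inverse_square_sum (lam (n + int (Suc J)) - lam n + gap lam (n + int (Suc J))) (gap lam (n + int (Suc J)))
      = ennreal S + (ennreal (b / (p + g)^2) + inverse_square_sum (p + g + b) b)"
    unfolding b_def by (simp add: add.assoc)
  also have "\<dots> \<le> ennreal S + inverse_square_sum (p + a) a"
    using p sm by (intro add_left_mono inverse_square_sum_next ag bg) (simp_all add: a_def b_def gap_pos)
  also have "\<dots> \<le> inverse_square_sum (gap lam n) (gap lam n)"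
    using Suc.IH unfolding S_def p_def a_def .
  finally show ?case .
qed simp

lemma gap_sum_right_le:
  assumes sm: "strict_mono lam"
  shows "(\<Sum>j=1..J. gap lam (n + int j) / (lam (n + int j) - lam n)^2) \<le> pi^2 / (6 * gap lam n)"
proof -
  have "ennreal (\<Sum>j=1..J. gap lam (n + int j) / (lam (n + int j) - lam n)^2)
     \<le> inverse_square_sum (gap lam n) (gap lam n)"
    using gap_sum_right_plus_inverse_square_sum[OF sm, of n J] by (rule order_trans[rotated]) simp
  also have "\<dots> = ennreal (pi^2 / (6 * gap lam n))"
    by (rule inverse_square_sum_start_eq_step[OF gap_pos[OF sm]])
  finally show ?thesis using gap_pos[OF sm, of n] by (subst (asm) ennreal_le_iff) auto
qed

lemma gap_sum_left_le:
  assumes sm: "strict_mono lam"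
  shows "(\<Sum>j=1..J. gap lam (n - int j) / (lam (n - int j) - lam n)^2) \<le> pi^2 / (6 * gap lam n)"
proof -
  define lam' where "lam' = (\<lambda>k. - lam (- k))"
  have sm': "strict_mono lam'" unfolding lam'_def using sm by (auto simp: strict_mono_def)
  have "(\<Sum>j=1..J. gap lam (n - int j) / (lam (n - int j) - lam n)^2)
      = (\<Sum>j=1..J. gap lam' (- n + int j) / (lam' (- n + int j) - lam' (- n))^2)"
    unfolding lam'_def gap_reflect by (intro sum.cong) (auto simp: power2_commute algebra_simps)
  also have "\<dots> \<le> pi^2 / (6 * gap lam' (- n))" by (rule gap_sum_right_le[OF sm'])
  finally show ?thesis unfolding lam'_def gap_reflect by simp
qed

lemma gap_sum_le:
  assumes sm: "strict_mono lam" and I: "finite I"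
  shows "(\<Sum>m\<in>I - {n}. gap lam m / (lam m - lam n)^2) \<le> pi^2 / (3 * gap lam n)"
proof -
  let ?f = "\<lambda>m. gap lam m / (lam m - lam n)^2"
  obtain k where k: "\<And>m. m \<in> I \<Longrightarrow> \<bar>m\<bar> \<le> k"
    using I unfolding finite_int_iff_bounded_le by auto
  define J where "J = nat (k + \<bar>n\<bar>)"
  have window: "{n - int J..n + int J} - {n} = (\<lambda>j. n + int j) ` {1..J} \<union> (\<lambda>j. n - int j) ` {1..J}"
  proof (intro equalityI subsetI)
    fix m assume "m \<in> {n - int J..n + int J} - {n}"
    then show "m \<in> (\<lambda>j. n + int j) ` {1..J} \<union> (\<lambda>j. n - int j) ` {1..J}"
      by (cases "n < m") (auto intro!: image_eqI[where x = "nat \<bar>m - n\<bar>"])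
  qed auto
  have "(\<Sum>m\<in>I - {n}. ?f m) \<le> (\<Sum>m\<in>{n - int J..n + int J} - {n}. ?f m)"
    using k sm unfolding J_def
    by (intro sum_mono2) (force, force, auto intro!: divide_nonneg_nonneg less_imp_le[OF gap_pos[OF sm]])
  also have "\<dots> = (\<Sum>j=1..J. ?f (n + int j)) + (\<Sum>j=1..J. ?f (n - int j))"
    unfolding window by (subst sum.union_disjoint) (auto simp: sum.reindex inj_on_def)
  also have "\<dots> \<le> pi^2 / (6 * gap lam n) + pi^2 / (6 * gap lam n)"
    by (intro add_mono gap_sum_right_le gap_sum_left_le sm)
  finally show ?thesis by simp
qed

section \<open>Hilbert sums and eigenvectors\<close>

definition hilbert_sum :: "(int \<Rightarrow> real) \<Rightarrow> int set \<Rightarrow> (int \<Rightarrow> 'a::real_field) \<Rightarrow> int \<Rightarrow> 'a" where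
  "hilbert_sum lam I z m = (\<Sum>n\<in>I - {m}. z n / of_real (lam m - lam n))"

lemma hilbert_sum_real: "hilbert_sum lam I x m = (\<Sum>n\<in>I - {m}. x n / (lam m - lam n))"
  unfolding hilbert_sum_def by simp

lemma Re_hilbert_sum: "Re (hilbert_sum lam I z m) = hilbert_sum lam I (\<lambda>n. Re (z n)) m"
  unfolding hilbert_sum_def by (simp add: Re_sum Re_divide_of_real)

lemma Im_hilbert_sum: "Im (hilbert_sum lam I z m) = hilbert_sum lam I (\<lambda>n. Im (z n)) m"
  unfolding hilbert_sum_def by (simp add: Im_sum Im_divide_of_real)

lemma sum_off_diagonal_swap:
  assumes "finite I"
  shows "(\<Sum>m\<in>I. \<Sum>n\<in>I - {m}. f m n) = (\<Sum>n\<in>I. \<Sum>m\<in>I - {n}. f m n)"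
proof -
  have "(\<Sum>m\<in>I. \<Sum>n\<in>I - {m}. f m n) = (\<Sum>m\<in>I. \<Sum>n\<in>{n\<in>I. m \<noteq> n}. f m n)"
    by (intro sum.cong) auto
  also have "\<dots> = (\<Sum>n\<in>I. \<Sum>m\<in>{m\<in>I. m \<noteq> n}. f m n)"
    by (rule sum.swap_restrict) (use assms in auto)
  also have "\<dots> = (\<Sum>n\<in>I. \<Sum>m\<in>I - {n}. f m n)"
    by (intro sum.cong) auto
  finally show ?thesis .
qed

lemma partial_fractions:
  fixes a b c :: real
  assumes "a \<noteq> b" "a \<noteq> c" "b \<noteq> c"
  shows "1 / (a - b) * (1 / (a - c)) = 1 / (b - c) * (1 / (a - b)) + 1 / (c - b) * (1 / (a - c))"
proof -
  have "a - b \<noteq> 0" "a - c \<noteq> 0" "b - c \<noteq> 0" "c - b \<noteq> 0" using assms by auto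
  then show ?thesis by (simp add: divide_simps) (simp add: algebra_simps)
qed

lemma hilbert_sum_remove_point:
  fixes x :: "int \<Rightarrow> real"
  assumes fin: "finite I" and "m \<in> I" "n \<in> I" "m \<noteq> n"
  shows "(\<Sum>k\<in>I - {m} - {n}. x k / (lam n - lam k)) = hilbert_sum lam I x n + x m / (lam m - lam n)"
proof -
  have "I - {m} - {n} = I - {n} - {m}" by blast
  moreover have "x m / (lam n - lam m) = - (x m / (lam m - lam n))"
    unfolding minus_diff_eq[of "lam m" "lam n", symmetric] divide_minus_right ..
  ultimately show ?thesis
    using assms unfolding hilbert_sum_real by (simp add: sum_diff1)
qed

text \<open>The identity behind the Montgomery--Vaughan argument: after expanding the square,
  the partial fraction decomposition turns the off-diagonal terms into Hilbert sums again.\<close>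
lemma hilbert_sum_square_expand:
  fixes x :: "int \<Rightarrow> real"
  assumes fin: "finite I" and inj: "inj_on lam I" and m: "m \<in> I"
  shows "(hilbert_sum lam I x m)^2 = (\<Sum>n\<in>I - {m}. (x n / (lam m - lam n))^2
    + 2 * (x n / (lam m - lam n) * (hilbert_sum lam I x n + x m / (lam m - lam n))))"
proof -
  define A where "A = I - {m}"
  define r where "r n = 1 / (lam m - lam n)" for n
  define \<rho> where "\<rho> n k = 1 / (lam n - lam k)" for n k
  have fA: "finite A" using fin by (simp add: A_def)
  have pf: "r n * r k = \<rho> n k * r n + \<rho> k n * r k" if "n \<in> A" "k \<in> A - {n}" for n k
    using that m inj unfolding r_def \<rho>_def A_def
    by (intro partial_fractions) (auto dest: inj_onD)
  have rest: "(\<Sum>k\<in>A - {n}. x k * \<rho> n k) = hilbert_sum lam I x n + x m * r n" if "n \<in> A" for n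
    using hilbert_sum_remove_point[OF fin m, of n x lam] that
    unfolding A_def \<rho>_def r_def by simp
  have "(hilbert_sum lam I x m)^2 = (\<Sum>n\<in>A. \<Sum>k\<in>A. x n * x k * (r n * r k))"
    unfolding hilbert_sum_real power2_eq_square sum_product A_def r_def by (simp add: ac_simps)
  also have "\<dots> = (\<Sum>n\<in>A. (x n * r n)^2 + (\<Sum>k\<in>A - {n}. x n * x k * (r n * r k)))"
    using fA by (intro sum.cong refl, subst sum.remove) (auto simp: power2_eq_square)
  also have "\<dots> = (\<Sum>n\<in>A. (x n * r n)^2) + (\<Sum>n\<in>A. \<Sum>k\<in>A - {n}. x n * x k * (\<rho> n k * r n))
      + (\<Sum>n\<in>A. \<Sum>k\<in>A - {n}. x n * x k * (\<rho> k n * r k))"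
  proof -
    have "(\<Sum>n\<in>A. \<Sum>k\<in>A - {n}. x n * x k * (r n * r k))
        = (\<Sum>n\<in>A. \<Sum>k\<in>A - {n}. x n * x k * (\<rho> n k * r n) + x n * x k * (\<rho> k n * r k))"
      by (intro sum.cong refl) (simp add: pf distrib_left)
    then show ?thesis by (simp add: sum.distrib add.assoc)
  qed
  also have "(\<Sum>n\<in>A. \<Sum>k\<in>A - {n}. x n * x k * (\<rho> k n * r k))
      = (\<Sum>n\<in>A. \<Sum>k\<in>A - {n}. x n * x k * (\<rho> n k * r n))"
    by (subst sum_off_diagonal_swap[OF fA]) (simp add: ac_simps)
  also have "(\<Sum>n\<in>A. \<Sum>k\<in>A - {n}. x n * x k * (\<rho> n k * r n))
      = (\<Sum>n\<in>A. x n * r n * (hilbert_sum lam I x n + x m * r n))"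
    by (simp add: rest sum_distrib_left[symmetric] ac_simps cong: sum.cong)
  finally show ?thesis
    unfolding A_def r_def by (simp only: sum.distrib mult_2 add.assoc times_divide_eq_right mult_1_right)
qed

lemma hilbert_sum_square:
  fixes x :: "int \<Rightarrow> real"
  assumes "finite I" "inj_on lam I" "m \<in> I"
  shows "(hilbert_sum lam I x m)^2 = (\<Sum>n\<in>I - {m}.
    ((x n)^2 + 2 * x m * x n) / (lam m - lam n)^2 + 2 * x n * hilbert_sum lam I x n / (lam m - lam n))"
  unfolding hilbert_sum_square_expand[OF assms]
proof (intro sum.cong refl)
  have expand: "(a / d)^2 + 2 * (a / d * (h + b / d)) = (a^2 + 2 * b * a) / d^2 + 2 * a * h / d"
    if "d \<noteq> 0" for a b d h :: real
    using that by (simp add: field_simps power2_eq_square)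
  fix n assume "n \<in> I - {m}"
  then have "lam m - lam n \<noteq> 0" using assms by (auto dest: inj_onD)
  from expand[OF this] show "(x n / (lam m - lam n))^2
      + 2 * (x n / (lam m - lam n) * (hilbert_sum lam I x n + x m / (lam m - lam n)))
    = ((x n)^2 + 2 * x m * x n) / (lam m - lam n)^2 + 2 * x n * hilbert_sum lam I x n / (lam m - lam n)" .
qed

lemma norm_hilbert_sum_square:
  fixes u :: "int \<Rightarrow> complex"
  assumes "finite I" "inj_on lam I" "m \<in> I"
  shows "(cmod (hilbert_sum lam I u m))^2 = (\<Sum>n\<in>I - {m}.
    ((cmod (u n))^2 + 2 * Re (u m * cnj (u n))) / (lam m - lam n)^2
      + 2 * Re (u n * cnj (hilbert_sum lam I u n)) / (lam m - lam n))" (is "_ = ?rhs")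
proof -
  have "(cmod (hilbert_sum lam I u m))^2
      = (hilbert_sum lam I (\<lambda>n. Re (u n)) m)^2 + (hilbert_sum lam I (\<lambda>n. Im (u n)) m)^2"
    by (simp add: cmod_power2 Re_hilbert_sum Im_hilbert_sum)
  also have "\<dots> = ?rhs"
    unfolding hilbert_sum_square[OF assms] sum.distrib[symmetric]
    by (intro sum.cong refl) (simp add: Re_hilbert_sum Im_hilbert_sum cmod_power2 add_divide_distrib algebra_simps)
  finally show ?thesis .
qed

lemma weighted_norm_hilbert_sum_square_sum:
  fixes u :: "int \<Rightarrow> complex" and w :: "int \<Rightarrow> real"
  assumes fin: "finite I" and inj: "inj_on lam I"
    and orth: "\<And>n. n \<in> I \<Longrightarrow> Re (u n * cnj (hilbert_sum lam I u n)) = 0"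
  shows "(\<Sum>m\<in>I. w m * (cmod (hilbert_sum lam I u m))^2)
    = (\<Sum>n\<in>I. (cmod (u n))^2 * (\<Sum>m\<in>I - {n}. w m / (lam m - lam n)^2))
      + 2 * (\<Sum>m\<in>I. \<Sum>n\<in>I - {m}. w m * Re (u m * cnj (u n)) / (lam m - lam n)^2)"
proof -
  have "w m * (cmod (hilbert_sum lam I u m))^2
      = (\<Sum>n\<in>I - {m}. w m * (cmod (u n))^2 / (lam m - lam n)^2
          + 2 * (w m * Re (u m * cnj (u n)) / (lam m - lam n)^2))" if m: "m \<in> I" for m
    unfolding norm_hilbert_sum_square[OF fin inj m] sum_distrib_left
  proof (intro sum.cong refl)
    fix n assume "n \<in> I - {m}"
    then have vanish: "Re (u n * cnj (hilbert_sum lam I u n)) = 0" by (intro orth) simp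
    show "w m * (((cmod (u n))^2 + 2 * Re (u m * cnj (u n))) / (lam m - lam n)^2
          + 2 * Re (u n * cnj (hilbert_sum lam I u n)) / (lam m - lam n))
        = w m * (cmod (u n))^2 / (lam m - lam n)^2 + 2 * (w m * Re (u m * cnj (u n)) / (lam m - lam n)^2)"
      unfolding vanish by (simp add: add_divide_distrib algebra_simps)
  qed
  then have "(\<Sum>m\<in>I. w m * (cmod (hilbert_sum lam I u m))^2)
      = (\<Sum>m\<in>I. \<Sum>n\<in>I - {m}. w m * (cmod (u n))^2 / (lam m - lam n)^2)
        + 2 * (\<Sum>m\<in>I. \<Sum>n\<in>I - {m}. w m * Re (u m * cnj (u n)) / (lam m - lam n)^2)"
    by (simp add: sum.distrib sum_distrib_left)
  also have "(\<Sum>m\<in>I. \<Sum>n\<in>I - {m}. w m * (cmod (u n))^2 / (lam m - lam n)^2)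
      = (\<Sum>n\<in>I. (cmod (u n))^2 * (\<Sum>m\<in>I - {n}. w m / (lam m - lam n)^2))"
    by (subst sum_off_diagonal_swap[OF fin]) (simp add: sum_distrib_left ac_simps)
  finally show ?thesis .
qed

lemma off_diagonal_Re_le:
  fixes u :: "int \<Rightarrow> complex"
  assumes sm: "strict_mono lam"
    and off: "\<And>t. (\<forall>n\<in>I. 0 \<le> t n) \<Longrightarrow>
       (\<Sum>m\<in>I. \<Sum>n\<in>I - {m}. gap lam m * t m * t n / (lam m - lam n)^2) \<le> C * (\<Sum>n\<in>I. (t n)^2 / gap lam n)"
  shows "(\<Sum>m\<in>I. \<Sum>n\<in>I - {m}. gap lam m * Re (u m * cnj (u n)) / (lam m - lam n)^2)
    \<le> C * (\<Sum>n\<in>I. (cmod (u n))^2 / gap lam n)"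
proof -
  have "(\<Sum>m\<in>I. \<Sum>n\<in>I - {m}. gap lam m * Re (u m * cnj (u n)) / (lam m - lam n)^2)
      \<le> (\<Sum>m\<in>I. \<Sum>n\<in>I - {m}. gap lam m * cmod (u m) * cmod (u n) / (lam m - lam n)^2)"
  proof (intro sum_mono divide_right_mono zero_le_power2)
    fix m n
    have "Re (u m * cnj (u n)) \<le> cmod (u m) * cmod (u n)"
      using complex_Re_le_cmod[of "u m * cnj (u n)"] by (simp only: norm_mult complex_mod_cnj)
    from mult_left_mono[OF this less_imp_le[OF gap_pos[OF sm]]]
    show "gap lam m * Re (u m * cnj (u n)) \<le> gap lam m * cmod (u m) * cmod (u n)"
      by (simp only: mult.assoc)
  qed
  also have "\<dots> \<le> C * (\<Sum>n\<in>I. (cmod (u n))^2 / gap lam n)" by (rule off) simp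
  finally show ?thesis .
qed

lemma hilbert_eigenvalue_bound:
  fixes u :: "int \<Rightarrow> complex"
  assumes sm: "strict_mono lam" and fin: "finite I"
    and off: "\<And>t. (\<forall>n\<in>I. 0 \<le> t n) \<Longrightarrow>
       (\<Sum>m\<in>I. \<Sum>n\<in>I - {m}. gap lam m * t m * t n / (lam m - lam n)^2) \<le> C * (\<Sum>n\<in>I. (t n)^2 / gap lam n)"
    and eig: "\<And>m. m \<in> I \<Longrightarrow> hilbert_sum lam I u m = - \<i> * of_real (\<mu> / gap lam m) * u m"
    and nz: "m0 \<in> I" "u m0 \<noteq> 0"
  shows "\<mu>^2 \<le> pi^2 / 3 + 2 * C"
proof -
  have gp: "0 < gap lam m" for m by (rule gap_pos[OF sm])
  have inj: "inj_on lam I" using strict_mono_imp_inj_on[OF sm] by (rule inj_on_subset) (rule subset_UNIV)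
  define N where "N = (\<Sum>n\<in>I. (cmod (u n))^2 / gap lam n)"
  have "0 < (cmod (u m0))^2 / gap lam m0" using nz gp by simp
  also have "\<dots> \<le> N" unfolding N_def using fin nz gp
    by (intro member_le_sum) (auto intro!: divide_nonneg_nonneg simp: less_imp_le[OF gp])
  finally have N: "0 < N" .
  have orth: "Re (u n * cnj (hilbert_sum lam I u n)) = 0" if "n \<in> I" for n
    by (cases "u n") (simp add: eig[OF that] algebra_simps)
  have "cmod (hilbert_sum lam I u m) = \<bar>\<mu>\<bar> / gap lam m * cmod (u m)" if "m \<in> I" for m
    using gp[of m] by (simp add: eig[OF that] norm_mult del: of_real_divide)
  then have "\<mu>^2 * N = (\<Sum>m\<in>I. gap lam m * (cmod (hilbert_sum lam I u m))^2)"
    unfolding N_def sum_distrib_left using gp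
    by (intro sum.cong refl) (simp add: power_mult_distrib power_divide power2_eq_square)
  also have "\<dots> = (\<Sum>n\<in>I. (cmod (u n))^2 * (\<Sum>m\<in>I - {n}. gap lam m / (lam m - lam n)^2))
      + 2 * (\<Sum>m\<in>I. \<Sum>n\<in>I - {m}. gap lam m * Re (u m * cnj (u n)) / (lam m - lam n)^2)"
    by (rule weighted_norm_hilbert_sum_square_sum[OF fin inj orth])
  also have "\<dots> \<le> pi^2 / 3 * N + 2 * (C * N)"
  proof (rule add_mono)
    have "(\<Sum>n\<in>I. (cmod (u n))^2 * (\<Sum>m\<in>I - {n}. gap lam m / (lam m - lam n)^2))
        \<le> (\<Sum>n\<in>I. (cmod (u n))^2 * (pi^2 / (3 * gap lam n)))"
      by (intro sum_mono mult_left_mono gap_sum_le[OF sm fin]) simp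
    also have "\<dots> = pi^2 / 3 * N" unfolding N_def sum_distrib_left by (simp add: ac_simps)
    finally show "(\<Sum>n\<in>I. (cmod (u n))^2 * (\<Sum>m\<in>I - {n}. gap lam m / (lam m - lam n)^2))
        \<le> pi^2 / 3 * N" .
  next
    show "2 * (\<Sum>m\<in>I. \<Sum>n\<in>I - {m}. gap lam m * Re (u m * cnj (u n)) / (lam m - lam n)^2)
        \<le> 2 * (C * N)"
      unfolding N_def using off_diagonal_Re_le[OF sm off] by simp
  qed
  finally have "\<mu>^2 * N \<le> (pi^2 / 3 + 2 * C) * N" by (simp add: algebra_simps)
  then show ?thesis using N by (simp add: mult_le_cancel_right_pos)
qed

section \<open>Maximising the Hilbert form\<close>

definition gap_inner :: "(int \<Rightarrow> real) \<Rightarrow> int set \<Rightarrow> (int \<Rightarrow> real) \<Rightarrow> (int \<Rightarrow> real) \<Rightarrow> real" where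
  "gap_inner lam I x y = (\<Sum>m\<in>I. x m * y m / gap lam m)"

definition hilbert_inner :: "(int \<Rightarrow> real) \<Rightarrow> int set \<Rightarrow> (int \<Rightarrow> real) \<Rightarrow> (int \<Rightarrow> real) \<Rightarrow> real" where
  "hilbert_inner lam I x y = (\<Sum>m\<in>I. gap lam m * hilbert_sum lam I x m * hilbert_sum lam I y m)"

lemma hilbert_sum_add_scaled:
  "hilbert_sum lam I (\<lambda>n. x n + t * y n) m = hilbert_sum lam I x m + t * hilbert_sum lam I y m"
  unfolding hilbert_sum_def by (simp add: sum.distrib sum_distrib_left add_divide_distrib)

lemma hilbert_sum_scaled: "hilbert_sum lam I (\<lambda>n. c * x n) m = c * hilbert_sum lam I x m"
  unfolding hilbert_sum_def by (simp add: sum_distrib_left)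

lemma hilbert_sum_cong: "(\<And>n. n \<in> I \<Longrightarrow> x n = y n) \<Longrightarrow> hilbert_sum lam I x m = hilbert_sum lam I y m"
  unfolding hilbert_sum_def by (intro sum.cong) auto

lemma gap_inner_add_scaled:
  "gap_inner lam I (\<lambda>n. x n + t * y n) (\<lambda>n. x n + t * y n)
    = gap_inner lam I x x + 2 * t * gap_inner lam I x y + t^2 * gap_inner lam I y y"
  unfolding gap_inner_def
  by (simp add: sum.distrib sum_distrib_left algebra_simps power2_eq_square add_divide_distrib)

lemma hilbert_inner_add_scaled:
  "hilbert_inner lam I (\<lambda>n. x n + t * y n) (\<lambda>n. x n + t * y n)
    = hilbert_inner lam I x x + 2 * t * hilbert_inner lam I x y + t^2 * hilbert_inner lam I y y"
  unfolding hilbert_inner_def hilbert_sum_add_scaled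
  by (simp add: sum.distrib sum_distrib_left algebra_simps power2_eq_square)

lemma gap_inner_scaled: "gap_inner lam I (\<lambda>n. c * x n) (\<lambda>n. c * x n) = c^2 * gap_inner lam I x x"
  unfolding gap_inner_def by (simp add: sum_distrib_left algebra_simps power2_eq_square)

lemma hilbert_inner_scaled: "hilbert_inner lam I (\<lambda>n. c * x n) (\<lambda>n. c * x n) = c^2 * hilbert_inner lam I x x"
  unfolding hilbert_inner_def hilbert_sum_scaled by (simp add: sum_distrib_left algebra_simps power2_eq_square)

lemma gap_inner_cong: "(\<And>n. n \<in> I \<Longrightarrow> x n = y n) \<Longrightarrow> gap_inner lam I x x = gap_inner lam I y y"
  unfolding gap_inner_def by (intro sum.cong) auto

lemma hilbert_inner_cong: "(\<And>n. n \<in> I \<Longrightarrow> x n = y n) \<Longrightarrow> hilbert_inner lam I x x = hilbert_inner lam I y y"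
  unfolding hilbert_inner_def by (intro sum.cong refl) (simp add: hilbert_sum_cong[of I x y])

lemma gap_inner_nonneg: "strict_mono lam \<Longrightarrow> 0 \<le> gap_inner lam I x x"
  unfolding gap_inner_def by (intro sum_nonneg divide_nonneg_nonneg) (auto intro: less_imp_le gap_pos)

lemma gap_inner_eq_0_iff:
  assumes "strict_mono lam" "finite I"
  shows "gap_inner lam I x x = 0 \<longleftrightarrow> (\<forall>n\<in>I. x n = 0)"
proof -
  have "0 \<le> gap lam n" "gap lam n \<noteq> 0" for n using gap_pos[OF assms(1), of n] by auto
  then show ?thesis unfolding gap_inner_def using assms(2)
    by (subst sum_nonneg_eq_0_iff) (auto intro!: divide_nonneg_nonneg)
qed

lemma continuous_on_gap_inner: "continuous_on UNIV (\<lambda>x. gap_inner lam I x x)"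
  unfolding gap_inner_def divide_inverse by (intro continuous_intros continuous_on_product_coordinates)

lemma continuous_on_hilbert_inner: "continuous_on UNIV (\<lambda>x. hilbert_inner lam I x x)"
  unfolding hilbert_inner_def hilbert_sum_real divide_inverse
  by (intro continuous_intros continuous_on_product_coordinates)

lemma square_le_gap_mult_gap_inner:
  assumes sm: "strict_mono lam" and "finite I" "n \<in> I"
  shows "(x n)^2 \<le> gap lam n * gap_inner lam I x x"
proof -
  have "(x n)^2 / gap lam n \<le> gap_inner lam I x x" unfolding gap_inner_def power2_eq_square
    using assms by (intro member_le_sum) (auto intro!: divide_nonneg_nonneg less_imp_le[OF gap_pos[OF sm]])
  then show ?thesis using gap_pos[OF sm, of n] by (simp add: divide_le_eq mult.commute)
qed

lemma hilbert_inner_max_exists: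
  assumes sm: "strict_mono lam" and fin: "finite I" and n0: "n0 \<in> I"
  obtains x0 where "gap_inner lam I x0 x0 = 1"
    and "\<And>x. gap_inner lam I x x = 1 \<Longrightarrow> hilbert_inner lam I x x \<le> hilbert_inner lam I x0 x0"
proof -
  define restrict :: "(int \<Rightarrow> real) \<Rightarrow> int \<Rightarrow> real" where "restrict x n = (if n \<in> I then x n else 0)" for x n
  define S where "S = PiE UNIV (\<lambda>n. if n \<in> I then cball 0 (sqrt (gap lam n)) else {0})
    \<inter> {x. gap_inner lam I x x = 1}"
  have "compactin (product_topology (\<lambda>_. euclidean) UNIV)
      (PiE UNIV (\<lambda>n. if n \<in> I then cball (0::real) (sqrt (gap lam n)) else {0}))"
    by (subst compactin_PiE) auto
  then have "compact (PiE UNIV (\<lambda>n. if n \<in> I then cball (0::real) (sqrt (gap lam n)) else {0}))"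
    by (simp add: euclidean_product_topology)
  then have "compact S"
    unfolding S_def by (intro compact_Int_closed closed_Collect_eq continuous_on_gap_inner continuous_on_const)
  have restrict_in_S: "restrict x \<in> S" if "gap_inner lam I x x = 1" for x
  proof -
    have "\<bar>x n\<bar> \<le> sqrt (gap lam n)" if "n \<in> I" for n
    proof -
      have "(x n)^2 \<le> gap lam n"
        using square_le_gap_mult_gap_inner[OF sm fin that, of x] \<open>gap_inner lam I x x = 1\<close> by simp
      then show ?thesis by (metis real_sqrt_abs real_sqrt_le_mono)
    qed
    moreover have "gap_inner lam I (restrict x) (restrict x) = 1"
      using that gap_inner_cong[of I "restrict x" x lam] by (simp add: restrict_def)
    ultimately show ?thesis unfolding S_def restrict_def by (auto simp: dist_real_def)
  qed
  define e where "e n = (if n = n0 then sqrt (gap lam n0) else 0)" for n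
  have "gap_inner lam I e e = (\<Sum>m\<in>I. if m = n0 then 1 else 0)"
    unfolding gap_inner_def e_def using gap_pos[OF sm, of n0] by (intro sum.cong) auto
  also have "\<dots> = 1" using fin n0 by simp
  finally have "restrict e \<in> S" by (rule restrict_in_S)
  then have "S \<noteq> {}" by auto
  then obtain x0 where "x0 \<in> S" and x0_max: "\<And>y. y \<in> S \<Longrightarrow> hilbert_inner lam I y y \<le> hilbert_inner lam I x0 x0"
    using continuous_attains_sup[OF \<open>compact S\<close> _ continuous_on_subset[OF continuous_on_hilbert_inner]] by blast
  show ?thesis
  proof (rule that)
    show "gap_inner lam I x0 x0 = 1" using \<open>x0 \<in> S\<close> by (simp add: S_def)
    fix x assume "gap_inner lam I x x = 1"
    then have "hilbert_inner lam I (restrict x) (restrict x) \<le> hilbert_inner lam I x0 x0"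
      by (intro x0_max restrict_in_S)
    then show "hilbert_inner lam I x x \<le> hilbert_inner lam I x0 x0"
      using hilbert_inner_cong[of I "restrict x" x lam] by (simp add: restrict_def)
  qed
qed

lemma hilbert_inner_le_max:
  assumes sm: "strict_mono lam" and fin: "finite I"
    and max: "\<And>x. gap_inner lam I x x = 1 \<Longrightarrow> hilbert_inner lam I x x \<le> \<sigma>"
  shows "hilbert_inner lam I x x \<le> \<sigma> * gap_inner lam I x x"
proof (cases "gap_inner lam I x x = 0")
  case True
  then have "hilbert_inner lam I x x = hilbert_inner lam I (\<lambda>_. 0) (\<lambda>_. 0)"
    using gap_inner_eq_0_iff[OF sm fin] by (intro hilbert_inner_cong) auto
  then show ?thesis using True by (simp add: hilbert_inner_def hilbert_sum_def)
next
  case False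
  then have pos: "0 < gap_inner lam I x x" using gap_inner_nonneg[OF sm, of I x] by linarith
  define c where "c = 1 / sqrt (gap_inner lam I x x)"
  have c2: "c^2 = 1 / gap_inner lam I x x" unfolding c_def using pos by (simp add: power_divide)
  have "c^2 * hilbert_inner lam I x x \<le> \<sigma>"
    using max[of "\<lambda>n. c * x n"] pos unfolding gap_inner_scaled hilbert_inner_scaled c2 by simp
  then show ?thesis using pos unfolding c2 by (simp add: divide_le_eq mult.commute)
qed

lemma linear_coeff_zero_if_nonneg:
  fixes a b :: real
  assumes "\<And>t. 0 \<le> a * t + b * t^2"
  shows "a = 0"
proof (rule ccontr)
  assume "a \<noteq> 0"
  define c where "c = \<bar>b\<bar> + 1"
  have "0 < c" unfolding c_def by simp
  then have "a * (- a / c) + b * (- a / c)^2 = (a^2 / c^2) * (b - c)"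
    by (simp add: field_simps power2_eq_square)
  also have "\<dots> < 0" using \<open>a \<noteq> 0\<close> by (intro mult_pos_neg) (auto simp: c_def)
  finally show False using assms[of "- a / c"] by simp
qed

lemma hilbert_inner_stationary:
  assumes le: "\<And>x. hilbert_inner lam I x x \<le> \<sigma> * gap_inner lam I x x"
    and eq: "hilbert_inner lam I x0 x0 = \<sigma> * gap_inner lam I x0 x0"
  shows "hilbert_inner lam I x0 y = \<sigma> * gap_inner lam I x0 y"
proof -
  have "0 \<le> (2 * \<sigma> * gap_inner lam I x0 y - 2 * hilbert_inner lam I x0 y) * t
      + (\<sigma> * gap_inner lam I y y - hilbert_inner lam I y y) * t^2" for t
    using le[of "\<lambda>n. x0 n + t * y n"] eq
    unfolding gap_inner_add_scaled hilbert_inner_add_scaled by (simp add: algebra_simps)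
  from linear_coeff_zero_if_nonneg[OF this] show ?thesis by simp
qed

lemma hilbert_sum_gap_hilbert_sum_stationary:
  assumes fin: "finite I" and n: "n \<in> I"
    and stat: "\<And>y. hilbert_inner lam I x y = \<sigma> * gap_inner lam I x y"
  shows "hilbert_sum lam I (\<lambda>m. gap lam m * hilbert_sum lam I x m) n = - (\<sigma> * x n / gap lam n)"
proof -
  define e :: "int \<Rightarrow> real" where "e k = (if k = n then 1 else 0)" for k
  have "hilbert_sum lam I e m = (\<Sum>k\<in>I - {m}. if k = n then 1 / (lam m - lam n) else 0)" for m
    unfolding hilbert_sum_real e_def by (intro sum.cong) auto
  then have He: "hilbert_sum lam I e m = (if m = n then 0 else 1 / (lam m - lam n))" for m
    using fin n by simp
  have "hilbert_inner lam I x e = (\<Sum>m\<in>I. if m = n then 0 else gap lam m * hilbert_sum lam I x m / (lam m - lam n))"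
    unfolding hilbert_inner_def He by (intro sum.cong) auto
  also have "\<dots> = (\<Sum>m\<in>I - {n}. gap lam m * hilbert_sum lam I x m / (lam m - lam n))"
    using fin n by (simp add: sum.remove[of I n])
  also have "\<dots> = - hilbert_sum lam I (\<lambda>m. gap lam m * hilbert_sum lam I x m) n"
    unfolding hilbert_sum_real sum_negf[symmetric]
    by (intro sum.cong refl) (simp add: divide_minus_right[symmetric])
  finally have "hilbert_sum lam I (\<lambda>m. gap lam m * hilbert_sum lam I x m) n = - hilbert_inner lam I x e"
    by simp
  also have "\<dots> = - (\<sigma> * x n / gap lam n)"
  proof -
    have "gap_inner lam I x e = (\<Sum>m\<in>I. if m = n then x n / gap lam n else 0)"
      unfolding gap_inner_def e_def by (intro sum.cong) auto
    then show ?thesis using fin n unfolding stat by simp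
  qed
  finally show ?thesis .
qed

lemma stationary_point_eigenvector:
  assumes sm: "strict_mono lam" and fin: "finite I" and \<sigma>: "0 < \<sigma>"
    and stat: "\<And>y. hilbert_inner lam I x y = \<sigma> * gap_inner lam I x y"
    and m: "m \<in> I"
  defines "u \<equiv> \<lambda>n. Complex (x n) (gap lam n * hilbert_sum lam I x n / sqrt \<sigma>)"
  shows "hilbert_sum lam I u m = - \<i> * of_real (sqrt \<sigma> / gap lam m) * u m"
proof (rule complex_eqI)
  have gp: "0 < gap lam m" by (rule gap_pos[OF sm])
  show "Re (hilbert_sum lam I u m) = Re (- \<i> * of_real (sqrt \<sigma> / gap lam m) * u m)"
    unfolding Re_hilbert_sum u_def using gp \<sigma> by simp
  have "hilbert_sum lam I (\<lambda>n. gap lam n * hilbert_sum lam I x n / sqrt \<sigma>) m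
      = hilbert_sum lam I (\<lambda>n. gap lam n * hilbert_sum lam I x n) m / sqrt \<sigma>"
    using hilbert_sum_scaled[of lam I "1 / sqrt \<sigma>" _ m] by simp
  also have "\<dots> = - (\<sigma> * x m / gap lam m) / sqrt \<sigma>"
    unfolding hilbert_sum_gap_hilbert_sum_stationary[OF fin m stat] ..
  also have "\<dots> = - (\<sigma> / sqrt \<sigma> * x m / gap lam m)" by simp
  also have "\<dots> = - (sqrt \<sigma> * x m / gap lam m)" using \<sigma> by (simp add: real_div_sqrt)
  finally show "Im (hilbert_sum lam I u m) = Im (- \<i> * of_real (sqrt \<sigma> / gap lam m) * u m)"
    unfolding Im_hilbert_sum u_def by simp
qed

lemma hilbert_inner_le:
  assumes sm: "strict_mono lam" and fin: "finite I"
    and off: "\<And>t. (\<forall>n\<in>I. 0 \<le> t n) \<Longrightarrow>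
       (\<Sum>m\<in>I. \<Sum>n\<in>I - {m}. gap lam m * t m * t n / (lam m - lam n)^2) \<le> C * (\<Sum>n\<in>I. (t n)^2 / gap lam n)"
    and C: "0 \<le> C"
  shows "hilbert_inner lam I x x \<le> (pi^2 / 3 + 2 * C) * gap_inner lam I x x"
proof (cases "I = {}")
  case True
  then show ?thesis by (simp add: hilbert_inner_def gap_inner_def)
next
  case False
  then obtain n0 where "n0 \<in> I" by blast
  then obtain x0 where x0_norm: "gap_inner lam I x0 x0 = 1"
    and x0_max: "\<And>x. gap_inner lam I x x = 1 \<Longrightarrow> hilbert_inner lam I x x \<le> hilbert_inner lam I x0 x0"
    using hilbert_inner_max_exists[OF sm fin] by blast
  define \<sigma> where "\<sigma> = hilbert_inner lam I x0 x0"
  have le: "hilbert_inner lam I x x \<le> \<sigma> * gap_inner lam I x x" for x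
    using sm fin x0_max unfolding \<sigma>_def by (rule hilbert_inner_le_max)
  have "\<sigma> \<le> pi^2 / 3 + 2 * C"
  proof (cases "0 < \<sigma>")
    case True
    define u where "u n = Complex (x0 n) (gap lam n * hilbert_sum lam I x0 n / sqrt \<sigma>)" for n
    have stat: "hilbert_inner lam I x0 y = \<sigma> * gap_inner lam I x0 y" for y
      using le by (rule hilbert_inner_stationary) (simp add: \<sigma>_def x0_norm)
    have eig: "hilbert_sum lam I u m = - \<i> * of_real (sqrt \<sigma> / gap lam m) * u m" if "m \<in> I" for m
      unfolding u_def using sm fin True stat that by (rule stationary_point_eigenvector)
    obtain m0 where m0: "m0 \<in> I" "x0 m0 \<noteq> 0"
      using x0_norm gap_inner_eq_0_iff[OF sm fin, of x0] by auto
    then have "u m0 \<noteq> 0" by (simp add: u_def complex_eq_iff)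
    with sm fin off eig m0(1) have "(sqrt \<sigma>)^2 \<le> pi^2 / 3 + 2 * C" by (rule hilbert_eigenvalue_bound)
    then show ?thesis using True by simp
  next
    case False
    moreover have "0 \<le> pi^2 / 3 + 2 * C" using C by simp
    ultimately show ?thesis by linarith
  qed
  then have "\<sigma> * gap_inner lam I x x \<le> (pi^2 / 3 + 2 * C) * gap_inner lam I x x"
    by (rule mult_right_mono) (rule gap_inner_nonneg[OF sm])
  with le show ?thesis by (rule order_trans)
qed

section \<open>The bilinear form\<close>

lemma hilbert_sum_energy_le:
  fixes z :: "int \<Rightarrow> complex"
  assumes sm: "strict_mono lam" and fin: "finite I"
    and off: "\<And>t. (\<forall>n\<in>I. 0 \<le> t n) \<Longrightarrow>
       (\<Sum>m\<in>I. \<Sum>n\<in>I - {m}. gap lam m * t m * t n / (lam m - lam n)^2) \<le> C * (\<Sum>n\<in>I. (t n)^2 / gap lam n)"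
    and C: "0 \<le> C"
  shows "(\<Sum>m\<in>I. gap lam m * (cmod (hilbert_sum lam I z m))^2)
    \<le> (pi^2 / 3 + 2 * C) * (\<Sum>n\<in>I. (cmod (z n))^2 / gap lam n)"
proof -
  let ?K = "pi^2 / 3 + 2 * C"
  have "(\<Sum>m\<in>I. gap lam m * (cmod (hilbert_sum lam I z m))^2)
      = hilbert_inner lam I (\<lambda>n. Re (z n)) (\<lambda>n. Re (z n)) + hilbert_inner lam I (\<lambda>n. Im (z n)) (\<lambda>n. Im (z n))"
    unfolding hilbert_inner_def cmod_power2 Re_hilbert_sum Im_hilbert_sum
    by (simp add: sum.distrib distrib_left power2_eq_square mult.assoc)
  also have "\<dots> \<le> ?K * gap_inner lam I (\<lambda>n. Re (z n)) (\<lambda>n. Re (z n)) + ?K * gap_inner lam I (\<lambda>n. Im (z n)) (\<lambda>n. Im (z n))"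
    by (intro add_mono hilbert_inner_le[OF sm fin off C])
  also have "\<dots> = ?K * (\<Sum>n\<in>I. (cmod (z n))^2 / gap lam n)"
    unfolding gap_inner_def cmod_power2
    by (simp add: sum.distrib distrib_left add_divide_distrib power2_eq_square)
  finally show ?thesis .
qed

lemma hilbert_bilinear_le:
  fixes z :: "int \<Rightarrow> complex"
  assumes sm: "strict_mono lam" and fin: "finite I"
    and off: "\<And>t. (\<forall>n\<in>I. 0 \<le> t n) \<Longrightarrow>
       (\<Sum>m\<in>I. \<Sum>n\<in>I - {m}. gap lam m * t m * t n / (lam m - lam n)^2) \<le> C * (\<Sum>n\<in>I. (t n)^2 / gap lam n)"
    and C: "0 \<le> C"
  shows "cmod (\<Sum>m\<in>I. \<Sum>n\<in>I - {m}. z m * cnj (z n) / complex_of_real (lam m - lam n))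
    \<le> sqrt (pi^2 / 3 + 2 * C) * (\<Sum>n\<in>I. (cmod (z n))^2 / gap lam n)"
proof -
  let ?K = "pi^2 / 3 + 2 * C"
  define N where "N = (\<Sum>n\<in>I. (cmod (z n))^2 / gap lam n)"
  have gp: "0 < gap lam m" for m by (rule gap_pos[OF sm])
  have "0 \<le> N" unfolding N_def using gp by (intro sum_nonneg divide_nonneg_nonneg) (auto intro: less_imp_le)
  have "(\<Sum>m\<in>I. \<Sum>n\<in>I - {m}. z m * cnj (z n) / complex_of_real (lam m - lam n))
      = (\<Sum>m\<in>I. z m * cnj (hilbert_sum lam I z m))"
    unfolding hilbert_sum_def by (simp add: sum_distrib_left)
  also have "cmod \<dots> \<le> (\<Sum>m\<in>I. (cmod (z m) / sqrt (gap lam m)) * (sqrt (gap lam m) * cmod (hilbert_sum lam I z m)))"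
    using gp by (intro order_trans[OF norm_sum] sum_mono) (simp add: norm_mult less_imp_le less_imp_neq[THEN not_sym])
  also have "\<dots> \<le> sqrt ((\<Sum>m\<in>I. (cmod (z m) / sqrt (gap lam m))^2)
      * (\<Sum>m\<in>I. (sqrt (gap lam m) * cmod (hilbert_sum lam I z m))^2))"
    by (rule real_le_rsqrt[OF Cauchy_Schwarz_ineq_sum])
  also have "\<dots> = sqrt (N * (\<Sum>m\<in>I. gap lam m * (cmod (hilbert_sum lam I z m))^2))"
    unfolding N_def using gp by (simp add: power_divide power_mult_distrib less_imp_le)
  also have "\<dots> \<le> sqrt (N * (?K * N))"
    using \<open>0 \<le> N\<close> hilbert_sum_energy_le[OF sm fin off C, of z]
    by (intro real_sqrt_le_mono mult_left_mono) (simp_all add: N_def)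
  also have "\<dots> = sqrt ?K * N" using \<open>0 \<le> N\<close> by (simp add: real_sqrt_mult)
  finally show ?thesis unfolding N_def .
qed

lemma gap_weighted_off_diagonal_le:
  assumes sm: "strict_mono lam"
    and hyp: "\<And>t. (\<forall>n\<in>I. 0 \<le> t n) \<Longrightarrow>
       (\<Sum>m\<in>I. \<Sum>n\<in>I - {m}. gap lam m powr (3/2) * gap lam n powr (1/2) * t m * t n / (lam m - lam n)^2)
         \<le> C * (\<Sum>n\<in>I. (t n)^2)"
    and t: "\<forall>n\<in>I. 0 \<le> t n"
  shows "(\<Sum>m\<in>I. \<Sum>n\<in>I - {m}. gap lam m * t m * t n / (lam m - lam n)^2) \<le> C * (\<Sum>n\<in>I. (t n)^2 / gap lam n)"
proof -
  have gp: "0 < gap lam n" for n by (rule gap_pos[OF sm])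
  have powr_three_halves: "g powr (3/2) = g * sqrt g" if "0 < g" for g :: real
    using that powr_add[of g 1 "1/2"] by (simp add: powr_half_sqrt)
  have "gap lam m powr (3/2) * gap lam n powr (1/2) * (t m / sqrt (gap lam m)) * (t n / sqrt (gap lam n))
      = gap lam m * t m * t n" for m n
    using gp[of m] gp[of n] by (simp add: powr_three_halves powr_half_sqrt less_imp_le field_simps)
  moreover have "(t n / sqrt (gap lam n))^2 = (t n)^2 / gap lam n" for n
    using gp[of n] by (simp add: power_divide less_imp_le)
  ultimately show ?thesis
    using hyp[of "\<lambda>n. t n / sqrt (gap lam n)"] t gp by (simp add: less_imp_le)
qed

theorem proposition1:
  fixes N :: nat and lam :: "int \<Rightarrow> real" and C3 :: real
  assumes "N \<ge> 1"
    and "strict_mono lam"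
    and "C3 > 0"
    and "\<And>t :: int \<Rightarrow> real. (\<forall>n\<in>{1..int N}. t n \<ge> 0) \<Longrightarrow>
           (\<Sum>m\<in>{1..int N}. \<Sum>n\<in>{1..int N} - {m}.
              gap lam m powr (3/2) * gap lam n powr (1/2) * t m * t n / (lam m - lam n)^2)
           \<le> C3 * (\<Sum>n\<in>{1..int N}. (t n)^2)"
  shows "\<And>z :: int \<Rightarrow> complex.
           cmod (\<Sum>m\<in>{1..int N}. \<Sum>n\<in>{1..int N} - {m}.
              z m * cnj (z n) / complex_of_real (lam m - lam n))
           \<le> sqrt (pi^2 / 3 + 2 * C3) * (\<Sum>n\<in>{1..int N}. (cmod (z n))^2 / gap lam n)"
proof -
  fix z :: "int \<Rightarrow> complex"
  have off: "\<And>t. (\<forall>n\<in>{1..int N}. 0 \<le> t n) \<Longrightarrow>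
      (\<Sum>m\<in>{1..int N}. \<Sum>n\<in>{1..int N} - {m}. gap lam m * t m * t n / (lam m - lam n)^2)
        \<le> C3 * (\<Sum>n\<in>{1..int N}. (t n)^2 / gap lam n)"
    using assms(2,4) by (rule gap_weighted_off_diagonal_le)
  \<comment> \<open>\<open>N \<ge> 1\<close> is not needed: for an empty index set both sides vanish.\<close>
  show "cmod (\<Sum>m\<in>{1..int N}. \<Sum>n\<in>{1..int N} - {m}. z m * cnj (z n) / complex_of_real (lam m - lam n))
      \<le> sqrt (pi^2 / 3 + 2 * C3) * (\<Sum>n\<in>{1..int N}. (cmod (z n))^2 / gap lam n)"
    using assms(2) finite_atLeastAtMost_int off less_imp_le[OF assms(3)] by (rule hilbert_bilinear_le)
qed

end
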